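(* Let $\mathcal{F}$ be a complete lattice cone of functions on a set $\Omega$ which contains all real constant functions. Let $p\in\mathcal{F}$ be real-valued and let $\xi\colon\mathbb{R}\to\mathbb{R}$ be convex and non-decreasing. Then $\xi\circ p\in\mathcal{F}$.
   Context: A complete lattice cone is a set of functions on $\Omega$ with values in $(-\infty,\infty]$, closed under nonnegative linear combinations and under pointwise suprema of arbitrary families. *)

theory Defs
  imports "HOL-Analysis.Analysis"
begin

text \<open>Functions on \<Omega> with values in (-\<infinity>,\<infinity>] are modelled as functions into ereal
  that never take the value -\<infinity>.  A complete lattice cone is a set of such
  functions closed under nonnegative linear combinations (with the usual
  convention 0 * \<infinity> = 0 of ereal) and under pointwise suprema of arbitrary
  nonempty families.\<close>

definition complete_lattice_cone :: "('a \<Rightarrow> ereal) set \<Rightarrow> bool" where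
  "complete_lattice_cone F \<longleftrightarrow>
     (\<forall>f\<in>F. \<forall>x. f x \<noteq> -\<infinity>) \<and>
     (\<forall>f\<in>F. \<forall>g\<in>F. \<forall>a b :: real. a \<ge> 0 \<longrightarrow> b \<ge> 0 \<longrightarrow>
        (\<lambda>x. ereal a * f x + ereal b * g x) \<in> F) \<and>
     (\<forall>G. G \<subseteq> F \<longrightarrow> G \<noteq> {} \<longrightarrow> (\<lambda>x. SUP g\<in>G. g x) \<in> F)"

end

theory Submission
  imports Defs
begin

text \<open>A convex non-decreasing \<xi> is the pointwise supremum of its supporting lines
  \<open>r \<mapsto> \<xi> t + s\<^sub>t (r - t)\<close>, and monotonicity makes every slope \<open>s\<^sub>t\<close> nonnegative.
  Hence \<open>\<xi> \<circ> p = sup\<^sub>t (s\<^sub>t p + (\<xi> t - s\<^sub>t t))\<close> is a supremum of nonnegative multiples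
  of p plus constants, each of which lies in the cone.\<close>

lemma mono_convex_on_support_line:
  fixes f :: "real \<Rightarrow> real"
  assumes "convex_on UNIV f" "mono f"
  shows "\<exists>s\<ge>0. \<forall>y. f t + s * (y - t) \<le> f y"
proof (intro exI conjI allI)
  let ?slopes = "(\<lambda>u. (f t - f u) / (t - u)) ` ({t<..} \<inter> UNIV)"
  show "f t + Inf ?slopes * (y - t) \<le> f y" for y
    using convex_le_Inf_differential[OF assms(1)] by simp
  have "(f t - f u) / (t - u) \<ge> 0" if "t < u" for u
    using \<open>mono f\<close> that by (intro divide_nonpos_neg) (auto simp: mono_def)
  then show "Inf ?slopes \<ge> 0"
    by (intro cInf_greatest) (auto intro: gt_ex)
qed

lemma mono_convex_on_eq_SUP_affine:
  fixes f :: "real \<Rightarrow> real"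
  assumes "convex_on UNIV f" "mono f"
  obtains a b :: "real \<Rightarrow> real"
  where "\<And>t. a t \<ge> 0" "\<And>r. (SUP t. ereal (a t * r + b t)) = ereal (f r)"
proof -
  obtain a where a: "\<forall>t. a t \<ge> 0 \<and> (\<forall>y. f t + a t * (y - t) \<le> f y)"
    using mono_convex_on_support_line[OF assms] by metis
  have "(SUP t. ereal (a t * r + (f t - a t * t))) = ereal (f r)" for r
  proof (rule antisym)
    show "(SUP t. ereal (a t * r + (f t - a t * t))) \<le> ereal (f r)"
      using a by (intro SUP_least) (simp add: algebra_simps)
    show "ereal (f r) \<le> (SUP t. ereal (a t * r + (f t - a t * t)))"
      by (rule SUP_upper2[of r]) auto
  qed
  with a show thesis by (intro that[of a "\<lambda>t. f t - a t * t"]) auto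
qed

lemma complete_lattice_cone_affine:
  assumes "complete_lattice_cone F" "\<forall>c::real. (\<lambda>_. ereal c) \<in> F" "p \<in> F" "a \<ge> 0"
  shows "(\<lambda>x. ereal a * p x + ereal b) \<in> F"
proof -
  note cone = assms(1)[unfolded complete_lattice_cone_def, THEN conjunct2, THEN conjunct1]
  from cone[rule_format, OF assms(3) assms(2)[rule_format, of b] assms(4) zero_le_one]
  show ?thesis by simp
qed

lemma complete_lattice_cone_SUP:
  assumes "complete_lattice_cone F" "\<And>i. f i \<in> F"
  shows "(\<lambda>x. SUP i. f i x) \<in> F"
proof -
  note SUP_closed = assms(1)[unfolded complete_lattice_cone_def, THEN conjunct2, THEN conjunct2]
  have "(\<lambda>x. SUP g\<in>range f. g x) \<in> F"
    using assms(2) by (intro SUP_closed[rule_format]) auto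
  then show ?thesis by (simp add: image_image)
qed

theorem mainTheorem6:
  fixes F :: "('a \<Rightarrow> ereal) set" and p :: "'a \<Rightarrow> ereal" and \<xi> :: "real \<Rightarrow> real"
  assumes "complete_lattice_cone F"
    and "\<forall>c::real. (\<lambda>_. ereal c) \<in> F"
    and "p \<in> F"
    and "\<forall>x. \<bar>p x\<bar> \<noteq> \<infinity>"
    and "convex_on UNIV \<xi>"
    and "mono \<xi>"
  shows "(\<lambda>x. ereal (\<xi> (real_of_ereal (p x)))) \<in> F"
proof -
  obtain a b :: "real \<Rightarrow> real" where a: "\<And>t. a t \<ge> 0"
    and \<xi>_SUP: "\<And>r. (SUP t. ereal (a t * r + b t)) = ereal (\<xi> r)"
    using mono_convex_on_eq_SUP_affine[OF assms(5,6)] by blast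
  have "(\<lambda>x. SUP t. ereal (a t) * p x + ereal (b t)) \<in> F"
    using assms(1-3) a by (intro complete_lattice_cone_SUP complete_lattice_cone_affine)
  moreover have "ereal (a t) * p x + ereal (b t) = ereal (a t * real_of_ereal (p x) + b t)"
    for t x using assms(4)[rule_format, of x] by (cases "p x") auto
  ultimately show ?thesis by (simp add: \<xi>_SUP)
qed

end
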